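(* Let $\mathcal{M}=\langle S,\iota,\mathsf{Act},P,\mathsf{Z},\mathsf{obs}\rangle$ be an MDP, $\tau\in\mathsf{Z}^+$ a trace and $r\colon S\to\mathbb{R}_{\ge0}$ a state-risk function. Then $R_r(\tau)=\sup_{\mathsf{bel}\in\mathsf{est}_{\mathsf{MDP}}(\tau)}\sum_{s\in S}\mathsf{bel}(s)\cdot r(s)$.
   Context: An MDP is a tuple $\langle S,\iota,\mathsf{Act},P,\mathsf{Z},\mathsf{obs}\rangle$: finite state set $S$, initial distribution $\iota\in\mathsf{Distr}(S)$, finite action set $\mathsf{Act}$, partial transition function $P\colon S\times\mathsf{Act}\rightharpoonup\mathsf{Distr}(S)$ (write $P(s,\alpha,s')=P(s,\alpha)(s')$), finite observation set $\mathsf{Z}$, observation function $\mathsf{obs}\colon S\to\mathsf{Distr}(\mathsf{Z})$; $\mathsf{AvAct}(s)=\{\alpha\mid P(s,\alpha)\text{ defined}\}\neq\emptyset$. A finite path is $\pi=s_0a_0\dots a_{n-1}s_n$ with $\iota(s_0)>0$, $P(s_i,a_i)(s_{i+1})>0$; $\mathrm{last}(\pi)=s_n$. A scheduler $\sigma$ maps each finite path $\pi$ to a distribution on $\mathsf{AvAct}(\mathrm{last}(\pi))$; $\Sigma$ is the set of schedulers; $\Pr^\sigma(\pi)=\iota(s_0)\prod_{i<n}\sigma(s_0a_0\dots s_i)(a_i)P(s_i,a_i)(s_{i+1})$. For a trace $\tau=z_0\dots z_n\in\mathsf{Z}^+$ and path $\pi=s_0\dots s_m$, $\Pr(\tau\mid\pi)=\prod_{i=0}^n\mathsf{obs}(s_i)(z_i)$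 if $m=n$, else $0$; $\mathrm{Paths}(\tau)$ are the paths with as many states as $\tau$ has observations; $\Pr^\sigma(\tau)=\sum_\pi\Pr^\sigma(\pi)\Pr(\tau\mid\pi)$; $\Pr^\sigma(\pi\mid\tau)=\Pr(\tau\mid\pi)\Pr^\sigma(\pi)/\Pr^\sigma(\tau)$ with $0/0=0$. The weighted risk is $R_r(\tau)=\sup_{\sigma\in\Sigma}\sum_{\pi\in\mathrm{Paths}(\tau)}\Pr^\sigma(\pi\mid\tau)r(\mathrm{last}(\pi))$. Beliefs: $\mathsf{Bel}=\mathsf{Distr}(S)\cup\{\mathbf{0}\}$, $\mathbf{0}$ the zero function on $S$. Define $\mathsf{est}_{\mathsf{MDP}}\colon\mathsf{Z}^+\to2^{\mathsf{Bel}}$ by $\mathsf{est}_{\mathsf{MDP}}(z)=\{b_z\}$ where $b_z(s)=\iota(s)\mathsf{obs}(s)(z)/\sum_{\hat s}\iota(\hat s)\mathsf{obs}(\hat s)(z)$ if some $s$ has $\iota(s)\mathsf{obs}(s)(z)>0$ and $b_z=\mathbf{0}$ otherwise; and $\mathsf{est}_{\mathsf{MDP}}(\tau\cdot z)=\bigcup_{\mathsf{bel}\in\mathsf{est}_{\mathsf{MDP}}(\tau)}\mathsf{est}^{\mathsf{up}}(\mathsf{bel},z)$, where $\mathsf{bel}'\in\mathsf{est}^{\mathsf{up}}(\mathsf{bel},z)$ iff there is $\varsigma\colon S\to\mathsf{Distr}(\mathsf{Act})$ with $\varsigma(s)$ supported in $\mathsf{AvAct}(s)$ such that for all $s'$: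 $\mathsf{bel}'(s')=\dfrac{\sum_s\mathsf{bel}(s)\sum_\alpha\varsigma(s)(\alpha)P(s,\alpha,s')\mathsf{obs}(s')(z)}{\sum_s\mathsf{bel}(s)\sum_\alpha\varsigma(s)(\alpha)\sum_{\hat s}P(s,\alpha,\hat s)\mathsf{obs}(\hat s)(z)}$ (with $0/0=0$). *)

theory Defs
  imports Complex_Main
begin

definition is_distr :: "('x::finite \<Rightarrow> real) \<Rightarrow> bool" where
  "is_distr f \<longleftrightarrow> (\<forall>x. 0 \<le> f x) \<and> (\<Sum>x\<in>UNIV. f x) = 1"

definition AvAct :: "('s \<Rightarrow> 'a \<Rightarrow> ('s \<Rightarrow> real) option) \<Rightarrow> 's \<Rightarrow> 'a set" where
  "AvAct P s = {\<alpha>. P s \<alpha> \<noteq> None}"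

definition Ptr :: "('s \<Rightarrow> 'a \<Rightarrow> ('s \<Rightarrow> real) option) \<Rightarrow> 's \<Rightarrow> 'a \<Rightarrow> 's \<Rightarrow> real" where
  "Ptr P s \<alpha> s' = (case P s \<alpha> of Some d \<Rightarrow> d s' | None \<Rightarrow> 0)"

definition mdp :: "('s::finite \<Rightarrow> real) \<Rightarrow> ('s \<Rightarrow> 'a::finite \<Rightarrow> ('s \<Rightarrow> real) option)
    \<Rightarrow> ('s \<Rightarrow> 'z::finite \<Rightarrow> real) \<Rightarrow> bool" where
  "mdp \<iota> P obs \<longleftrightarrow> is_distr \<iota> \<and> (\<forall>s \<alpha> d. P s \<alpha> = Some d \<longrightarrow> is_distr d)
     \<and> (\<forall>s. is_distr (obs s)) \<and> (\<forall>s. AvAct P s \<noteq> {})"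

text \<open>A finite path s0 a0 s1 ... a(n-1) sn is represented as the pair of its state list
  [s0,...,sn] and its action list [a0,...,a(n-1)].\<close>

definition is_path :: "('s \<Rightarrow> real) \<Rightarrow> ('s \<Rightarrow> 'a \<Rightarrow> ('s \<Rightarrow> real) option)
    \<Rightarrow> 's list \<times> 'a list \<Rightarrow> bool" where
  "is_path \<iota> P \<pi> \<longleftrightarrow> length (fst \<pi>) = Suc (length (snd \<pi>)) \<and> \<iota> (fst \<pi> ! 0) > 0 \<and>
     (\<forall>i < length (snd \<pi>). P (fst \<pi> ! i) (snd \<pi> ! i) \<noteq> None \<and>
        Ptr P (fst \<pi> ! i) (snd \<pi> ! i) (fst \<pi> ! Suc i) > 0)"

definition last_st :: "'s list \<times> 'a list \<Rightarrow> 's" where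
  "last_st \<pi> = last (fst \<pi>)"

definition path_prefix :: "'s list \<times> 'a list \<Rightarrow> nat \<Rightarrow> 's list \<times> 'a list" where
  "path_prefix \<pi> i = (take (Suc i) (fst \<pi>), take i (snd \<pi>))"

text \<open>Schedulers: map every finite path to a distribution over the actions available
  in its last state (values on non-paths are irrelevant).\<close>

definition schedulers :: "('s \<Rightarrow> real) \<Rightarrow> ('s \<Rightarrow> 'a::finite \<Rightarrow> ('s \<Rightarrow> real) option)
    \<Rightarrow> ('s list \<times> 'a list \<Rightarrow> 'a \<Rightarrow> real) set" where
  "schedulers \<iota> P = {\<sigma>. \<forall>\<pi>. is_path \<iota> P \<pi> \<longrightarrow>
      is_distr (\<sigma> \<pi>) \<and> (\<forall>\<alpha>. \<sigma> \<pi> \<alpha> > 0 \<longrightarrow> \<alpha> \<in> AvAct P (last_st \<pi>))}"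

definition Pr_path :: "('s \<Rightarrow> real) \<Rightarrow> ('s \<Rightarrow> 'a \<Rightarrow> ('s \<Rightarrow> real) option)
    \<Rightarrow> ('s list \<times> 'a list \<Rightarrow> 'a \<Rightarrow> real) \<Rightarrow> 's list \<times> 'a list \<Rightarrow> real" where
  "Pr_path \<iota> P \<sigma> \<pi> = \<iota> (fst \<pi> ! 0) *
     (\<Prod>i<length (snd \<pi>). \<sigma> (path_prefix \<pi> i) (snd \<pi> ! i) *
        Ptr P (fst \<pi> ! i) (snd \<pi> ! i) (fst \<pi> ! Suc i))"

definition Pr_obs :: "('s \<Rightarrow> 'z \<Rightarrow> real) \<Rightarrow> 'z list \<Rightarrow> 's list \<times> 'a list \<Rightarrow> real" where
  "Pr_obs obs \<tau> \<pi> = (if length (fst \<pi>) = length \<tau>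
      then (\<Prod>i<length \<tau>. obs (fst \<pi> ! i) (\<tau> ! i)) else 0)"

definition Paths_tr :: "('s \<Rightarrow> real) \<Rightarrow> ('s \<Rightarrow> 'a \<Rightarrow> ('s \<Rightarrow> real) option)
    \<Rightarrow> 'z list \<Rightarrow> ('s list \<times> 'a list) set" where
  "Paths_tr \<iota> P \<tau> = {\<pi>. is_path \<iota> P \<pi> \<and> length (fst \<pi>) = length \<tau>}"

definition Pr_trace :: "('s \<Rightarrow> real) \<Rightarrow> ('s \<Rightarrow> 'a \<Rightarrow> ('s \<Rightarrow> real) option) \<Rightarrow> ('s \<Rightarrow> 'z \<Rightarrow> real)
    \<Rightarrow> ('s list \<times> 'a list \<Rightarrow> 'a \<Rightarrow> real) \<Rightarrow> 'z list \<Rightarrow> real" where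
  "Pr_trace \<iota> P obs \<sigma> \<tau> = (\<Sum>\<pi>\<in>Paths_tr \<iota> P \<tau>. Pr_path \<iota> P \<sigma> \<pi> * Pr_obs obs \<tau> \<pi>)"

definition Pr_cond :: "('s \<Rightarrow> real) \<Rightarrow> ('s \<Rightarrow> 'a \<Rightarrow> ('s \<Rightarrow> real) option) \<Rightarrow> ('s \<Rightarrow> 'z \<Rightarrow> real)
    \<Rightarrow> ('s list \<times> 'a list \<Rightarrow> 'a \<Rightarrow> real) \<Rightarrow> 's list \<times> 'a list \<Rightarrow> 'z list \<Rightarrow> real" where
  "Pr_cond \<iota> P obs \<sigma> \<pi> \<tau> = Pr_obs obs \<tau> \<pi> * Pr_path \<iota> P \<sigma> \<pi> / Pr_trace \<iota> P obs \<sigma> \<tau>"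

definition risk :: "('s \<Rightarrow> real) \<Rightarrow> ('s \<Rightarrow> 'a::finite \<Rightarrow> ('s \<Rightarrow> real) option) \<Rightarrow> ('s \<Rightarrow> 'z \<Rightarrow> real)
    \<Rightarrow> ('s \<Rightarrow> real) \<Rightarrow> 'z list \<Rightarrow> real" where
  "risk \<iota> P obs r \<tau> = (SUP \<sigma>\<in>schedulers \<iota> P.
      \<Sum>\<pi>\<in>Paths_tr \<iota> P \<tau>. Pr_cond \<iota> P obs \<sigma> \<pi> \<tau> * r (last_st \<pi>))"

definition bel_init :: "('s::finite \<Rightarrow> real) \<Rightarrow> ('s \<Rightarrow> 'z \<Rightarrow> real) \<Rightarrow> 'z \<Rightarrow> ('s \<Rightarrow> real)" where
  "bel_init \<iota> obs z = (if \<exists>s. \<iota> s * obs s z > 0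
      then (\<lambda>s. \<iota> s * obs s z / (\<Sum>s'\<in>UNIV. \<iota> s' * obs s' z)) else (\<lambda>_. 0))"

definition est_up :: "('s::finite \<Rightarrow> 'a::finite \<Rightarrow> ('s \<Rightarrow> real) option) \<Rightarrow> ('s \<Rightarrow> 'z \<Rightarrow> real)
    \<Rightarrow> ('s \<Rightarrow> real) \<Rightarrow> 'z \<Rightarrow> ('s \<Rightarrow> real) set" where
  "est_up P obs bel z = {bel'. \<exists>\<zeta> :: 's \<Rightarrow> 'a \<Rightarrow> real.
      (\<forall>s. is_distr (\<zeta> s) \<and> (\<forall>\<alpha>. \<zeta> s \<alpha> > 0 \<longrightarrow> \<alpha> \<in> AvAct P s)) \<and>
      (\<forall>s'. bel' s' =
        (\<Sum>s\<in>UNIV. bel s * (\<Sum>\<alpha>\<in>UNIV. \<zeta> s \<alpha> * Ptr P s \<alpha> s' * obs s' z)) /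
        (\<Sum>s\<in>UNIV. bel s * (\<Sum>\<alpha>\<in>UNIV. \<zeta> s \<alpha> * (\<Sum>t\<in>UNIV. Ptr P s \<alpha> t * obs t z))))}"

text \<open>est_rev works on the reversed trace (last observation first).\<close>
fun est_rev :: "('s::finite \<Rightarrow> real) \<Rightarrow> ('s \<Rightarrow> 'a::finite \<Rightarrow> ('s \<Rightarrow> real) option)
    \<Rightarrow> ('s \<Rightarrow> 'z \<Rightarrow> real) \<Rightarrow> 'z list \<Rightarrow> ('s \<Rightarrow> real) set" where
  "est_rev \<iota> P obs [] = {}"
| "est_rev \<iota> P obs [z] = {bel_init \<iota> obs z}"
| "est_rev \<iota> P obs (z # y # zs) = (\<Union>bel\<in>est_rev \<iota> P obs (y # zs). est_up P obs bel z)"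

definition est_MDP :: "('s::finite \<Rightarrow> real) \<Rightarrow> ('s \<Rightarrow> 'a::finite \<Rightarrow> ('s \<Rightarrow> real) option)
    \<Rightarrow> ('s \<Rightarrow> 'z \<Rightarrow> real) \<Rightarrow> 'z list \<Rightarrow> ('s \<Rightarrow> real) set" where
  "est_MDP \<iota> P obs \<tau> = est_rev \<iota> P obs (rev \<tau>)"

end

theory Submission
  imports Defs
begin

text \<open>For a scheduler \<sigma>, the forward vector at a trace \<tau> assigns to each state s the joint
  probability of \<tau> and a path ending in s; the posterior risk of \<sigma> is the r-expectation of the
  normalised forward vector. Appending an observation z transforms the forward vector by one
  unnormalised belief update, namely with the state-based choice that picks \<alpha> in s with the
  weighted average of the probabilities with which \<sigma> picks \<alpha> after the histories ending in s.
  Conversely, every state-based choice is realised at the last step by a scheduler that agrees with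
  \<sigma> on shorter paths. As normalisation commutes with belief updates, est_MDP \<tau> is exactly the set
  of normalised forward vectors of all schedulers, so both suprema range over the same values.\<close>

lemma sum_mult_group_by:
  fixes g :: "'b \<Rightarrow> 'c::finite" and f :: "'b \<Rightarrow> 'd::comm_semiring_0"
  shows "(\<Sum>x\<in>A. f x * h (g x)) = (\<Sum>y\<in>UNIV. (\<Sum>x\<in>A. if g x = y then f x else 0) * h y)"
proof -
  have "(\<Sum>y\<in>UNIV. (\<Sum>x\<in>A. if g x = y then f x else 0) * h y) =
      (\<Sum>y\<in>UNIV. \<Sum>x\<in>A. if g x = y then f x * h y else 0)"
    by (simp add: sum_distrib_right if_distrib[of "\<lambda>v. v * _"] cong: if_cong)
  also have "\<dots> = (\<Sum>x\<in>A. f x * h (g x))"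
    by (subst sum.swap) simp
  finally show ?thesis ..
qed

definition skeletons :: "nat \<Rightarrow> ('s list \<times> 'a list) set" where
  "skeletons n = {\<pi>. length (fst \<pi>) = Suc n \<and> length (snd \<pi>) = n}"

definition Pr_joint :: "('s \<Rightarrow> real) \<Rightarrow> ('s \<Rightarrow> 'a \<Rightarrow> ('s \<Rightarrow> real) option) \<Rightarrow> ('s \<Rightarrow> 'z \<Rightarrow> real)
    \<Rightarrow> ('s list \<times> 'a list \<Rightarrow> 'a \<Rightarrow> real) \<Rightarrow> 'z list \<Rightarrow> 's list \<times> 'a list \<Rightarrow> real" where
  "Pr_joint \<iota> P obs \<sigma> \<tau> \<pi> = Pr_path \<iota> P \<sigma> \<pi> * Pr_obs obs \<tau> \<pi>"

text \<open>Summing over skeletons rather than paths is harmless, as Pr_path vanishes off paths,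
  and lets sums split along the last step.\<close>
definition forward :: "('s \<Rightarrow> real) \<Rightarrow> ('s \<Rightarrow> 'a \<Rightarrow> ('s \<Rightarrow> real) option) \<Rightarrow> ('s \<Rightarrow> 'z \<Rightarrow> real)
    \<Rightarrow> ('s list \<times> 'a list \<Rightarrow> 'a \<Rightarrow> real) \<Rightarrow> 'z list \<Rightarrow> 's \<Rightarrow> real" where
  "forward \<iota> P obs \<sigma> \<tau> s =
     (\<Sum>\<pi>\<in>skeletons (length \<tau> - 1). if last_st \<pi> = s then Pr_joint \<iota> P obs \<sigma> \<tau> \<pi> else 0)"

definition forward_action :: "('s \<Rightarrow> real) \<Rightarrow> ('s \<Rightarrow> 'a \<Rightarrow> ('s \<Rightarrow> real) option) \<Rightarrow> ('s \<Rightarrow> 'z \<Rightarrow> real)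
    \<Rightarrow> ('s list \<times> 'a list \<Rightarrow> 'a \<Rightarrow> real) \<Rightarrow> 'z list \<Rightarrow> 's \<Rightarrow> 'a \<Rightarrow> real" where
  "forward_action \<iota> P obs \<sigma> \<tau> s \<alpha> =
     (\<Sum>\<pi>\<in>skeletons (length \<tau> - 1). if last_st \<pi> = s then Pr_joint \<iota> P obs \<sigma> \<tau> \<pi> * \<sigma> \<pi> \<alpha> else 0)"

text \<open>The zero vector is normalised to itself (x / 0 = 0), matching the belief 0 of est_MDP.\<close>
definition normalized :: "('s::finite \<Rightarrow> real) \<Rightarrow> 's \<Rightarrow> real" where
  "normalized u = (\<lambda>s. u s / (\<Sum>t\<in>UNIV. u t))"

definition stationary_choice :: "('s \<Rightarrow> 'a \<Rightarrow> ('s \<Rightarrow> real) option) \<Rightarrow> ('s \<Rightarrow> 'a::finite \<Rightarrow> real) \<Rightarrow> bool"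
  where "stationary_choice P \<zeta> \<longleftrightarrow> (\<forall>s. is_distr (\<zeta> s) \<and> (\<forall>\<alpha>. \<zeta> s \<alpha> > 0 \<longrightarrow> \<alpha> \<in> AvAct P s))"

definition belief_step :: "('s::finite \<Rightarrow> 'a::finite \<Rightarrow> ('s \<Rightarrow> real) option) \<Rightarrow> ('s \<Rightarrow> 'z \<Rightarrow> real)
    \<Rightarrow> ('s \<Rightarrow> 'a \<Rightarrow> real) \<Rightarrow> 'z \<Rightarrow> ('s \<Rightarrow> real) \<Rightarrow> 's \<Rightarrow> real" where
  "belief_step P obs \<zeta> z u =
     (\<lambda>s'. \<Sum>s\<in>UNIV. u s * (\<Sum>\<alpha>\<in>UNIV. \<zeta> s \<alpha> * Ptr P s \<alpha> s' * obs s' z))"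

lemma finite_skeletons: "finite (skeletons n :: ('s::finite list \<times> 'a::finite list) set)"
proof -
  have "skeletons n = {ss::'s list. set ss \<subseteq> UNIV \<and> length ss = Suc n} \<times>
      {as::'a list. set as \<subseteq> UNIV \<and> length as = n}"
    unfolding skeletons_def by auto
  then show ?thesis
    using finite_lists_length_eq[of "UNIV::'s set"] finite_lists_length_eq[of "UNIV::'a set"] by simp
qed

lemma skeletons_0: "skeletons 0 = (\<lambda>s. ([s], [])) ` UNIV"
  unfolding skeletons_def by (auto simp: length_Suc_conv image_def)

lemma skeletons_Suc:
  "(skeletons (Suc n) :: ('s list \<times> 'a list) set) =
    (\<lambda>(\<pi>, \<alpha>, t). (fst \<pi> @ [t], snd \<pi> @ [\<alpha>])) ` (skeletons n \<times> UNIV \<times> UNIV)"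
  (is "_ = ?g ` _")
proof
  show "?g ` (skeletons n \<times> UNIV \<times> UNIV) \<subseteq> skeletons (Suc n)"
    by (auto simp: skeletons_def)
  show "skeletons (Suc n) \<subseteq> ?g ` (skeletons n \<times> UNIV \<times> UNIV)"
  proof
    fix \<pi> :: "'s list \<times> 'a list" assume "\<pi> \<in> skeletons (Suc n)"
    then have len: "length (fst \<pi>) = Suc (Suc n)" "length (snd \<pi>) = Suc n"
      by (auto simp: skeletons_def)
    then have "fst \<pi> \<noteq> []" "snd \<pi> \<noteq> []" by auto
    then have "\<pi> = ?g ((butlast (fst \<pi>), butlast (snd \<pi>)), last (snd \<pi>), last (fst \<pi>))"
      by (simp add: prod_eq_iff)
    moreover have "((butlast (fst \<pi>), butlast (snd \<pi>)), last (snd \<pi>), last (fst \<pi>)) \<in>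
        skeletons n \<times> UNIV \<times> UNIV"
      using len by (simp add: skeletons_def)
    ultimately show "\<pi> \<in> ?g ` (skeletons n \<times> UNIV \<times> UNIV)" by blast
  qed
qed

lemma sum_skeletons_Suc:
  fixes f :: "'s::finite list \<times> 'a::finite list \<Rightarrow> 'b::comm_monoid_add"
  shows "(\<Sum>\<pi>\<in>skeletons (Suc n). f \<pi>) =
    (\<Sum>\<pi>\<in>skeletons n. \<Sum>\<alpha>\<in>UNIV. \<Sum>t\<in>UNIV. f (fst \<pi> @ [t], snd \<pi> @ [\<alpha>]))"
proof -
  have inj: "inj_on (\<lambda>(\<pi>, \<alpha>, t). (fst \<pi> @ [t], snd \<pi> @ [\<alpha>])) (skeletons n \<times> UNIV \<times> UNIV)"
    by (auto simp: inj_on_def prod_eq_iff)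
  have "(\<Sum>\<pi>\<in>skeletons (Suc n). f \<pi>) =
      (\<Sum>(\<pi>, \<alpha>, t)\<in>skeletons n \<times> UNIV \<times> UNIV. f (fst \<pi> @ [t], snd \<pi> @ [\<alpha>]))"
    unfolding skeletons_Suc sum.reindex[OF inj] by (simp add: comp_def case_prod_unfold)
  also have "\<dots> = (\<Sum>\<pi>\<in>skeletons n. \<Sum>\<alpha>\<in>UNIV. \<Sum>t\<in>UNIV. f (fst \<pi> @ [t], snd \<pi> @ [\<alpha>]))"
    by (simp only: sum.cartesian_product[symmetric])
  finally show ?thesis .
qed

lemma Pr_path_snoc:
  assumes "length ss = Suc n" "length as = n"
  shows "Pr_path \<iota> P \<sigma> (ss @ [t], as @ [\<alpha>]) =
    Pr_path \<iota> P \<sigma> (ss, as) * \<sigma> (ss, as) \<alpha> * Ptr P (last ss) \<alpha> t"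
proof -
  have "ss \<noteq> []" using assms by auto
  then have last: "ss ! n = last ss" using assms by (simp add: last_conv_nth)
  have "path_prefix (ss @ [t], as @ [\<alpha>]) i = path_prefix (ss, as) i" if "i \<le> n" for i
    using that assms by (simp add: path_prefix_def)
  then have "(\<Prod>i<n. \<sigma> (path_prefix (ss @ [t], as @ [\<alpha>]) i) ((as @ [\<alpha>]) ! i) *
        Ptr P ((ss @ [t]) ! i) ((as @ [\<alpha>]) ! i) ((ss @ [t]) ! Suc i)) =
      (\<Prod>i<n. \<sigma> (path_prefix (ss, as) i) (as ! i) * Ptr P (ss ! i) (as ! i) (ss ! Suc i))"
    using assms by (intro prod.cong) (simp_all add: nth_append)
  moreover have "path_prefix (ss, as) n = (ss, as)"
    using assms by (simp add: path_prefix_def)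
  ultimately show ?thesis
    unfolding Pr_path_def using assms last \<open>ss \<noteq> []\<close>
    by (simp add: prod.lessThan_Suc nth_append path_prefix_def mult_ac)
qed

lemma Pr_path_cong_prefixes:
  assumes "\<pi> \<in> skeletons n" "\<And>\<pi>'. length (snd \<pi>') < n \<Longrightarrow> \<sigma>' \<pi>' = \<sigma> \<pi>'"
  shows "Pr_path \<iota> P \<sigma>' \<pi> = Pr_path \<iota> P \<sigma> \<pi>"
  using assms unfolding Pr_path_def skeletons_def by (auto intro!: prod.cong simp: path_prefix_def)

lemma Pr_obs_snoc:
  "length (fst \<pi>) = length \<tau> \<Longrightarrow> Pr_obs obs (\<tau> @ [z]) (fst \<pi> @ [t], as) = Pr_obs obs \<tau> \<pi> * obs t z"
  unfolding Pr_obs_def by (simp add: prod.lessThan_Suc nth_append)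

lemma Pr_joint_snoc:
  assumes "\<pi> \<in> skeletons n" "length \<tau> = Suc n"
  shows "Pr_joint \<iota> P obs \<sigma> (\<tau> @ [z]) (fst \<pi> @ [t], snd \<pi> @ [\<alpha>]) =
    Pr_joint \<iota> P obs \<sigma> \<tau> \<pi> * \<sigma> \<pi> \<alpha> * Ptr P (last_st \<pi>) \<alpha> t * obs t z"
  using assms unfolding skeletons_def Pr_joint_def last_st_def
  by (simp add: Pr_path_snoc Pr_obs_snoc)

lemma sum_belief_step:
  "(\<Sum>t\<in>UNIV. belief_step P obs \<zeta> z u t) =
     (\<Sum>s\<in>UNIV. u s * (\<Sum>\<alpha>\<in>UNIV. \<zeta> s \<alpha> * (\<Sum>t\<in>UNIV. Ptr P s \<alpha> t * obs t z)))"
proof -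
  have "(\<Sum>t\<in>UNIV. belief_step P obs \<zeta> z u t) =
      (\<Sum>s\<in>UNIV. u s * (\<Sum>t\<in>UNIV. \<Sum>\<alpha>\<in>UNIV. \<zeta> s \<alpha> * Ptr P s \<alpha> t * obs t z))"
    unfolding belief_step_def sum_distrib_left by (rule sum.swap)
  also have "\<dots> = (\<Sum>s\<in>UNIV. u s * (\<Sum>\<alpha>\<in>UNIV. \<zeta> s \<alpha> * (\<Sum>t\<in>UNIV. Ptr P s \<alpha> t * obs t z)))"
    by (subst sum.swap) (simp add: sum_distrib_left mult.assoc)
  finally show ?thesis .
qed

lemma est_up_eq_normalized_belief_step:
  "est_up P obs bel z = {normalized (belief_step P obs \<zeta> z bel) | \<zeta>. stationary_choice P \<zeta>}"
  unfolding est_up_def stationary_choice_def normalized_def sum_belief_step[symmetric]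
  unfolding belief_step_def[of P obs _ z bel] fun_eq_iff[symmetric]
  by blast

lemma normalized_belief_step_normalized:
  assumes "\<forall>s. 0 \<le> u s"
  shows "normalized (belief_step P obs \<zeta> z (normalized u)) = normalized (belief_step P obs \<zeta> z u)"
proof (cases "(\<Sum>t\<in>UNIV. u t) = 0")
  case True
  then have "u = (\<lambda>_. 0)" using assms sum_nonneg_eq_0_iff[of UNIV u] by auto
  then show ?thesis by (simp add: normalized_def belief_step_def)
next
  case False
  have "belief_step P obs \<zeta> z (normalized u) = (\<lambda>s'. belief_step P obs \<zeta> z u s' / (\<Sum>t\<in>UNIV. u t))"
    unfolding belief_step_def normalized_def by (simp add: sum_divide_distrib)
  then show ?thesis using False
    by (simp add: normalized_def sum_divide_distrib[symmetric])
qed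

lemma est_MDP_singleton: "est_MDP \<iota> P obs [z] = {bel_init \<iota> obs z}"
  unfolding est_MDP_def by simp

lemma est_MDP_snoc:
  assumes "\<tau> \<noteq> []"
  shows "est_MDP \<iota> P obs (\<tau> @ [z]) = (\<Union>bel\<in>est_MDP \<iota> P obs \<tau>. est_up P obs bel z)"
proof -
  obtain y zs where "rev \<tau> = y # zs" using assms by (cases "rev \<tau>") auto
  then show ?thesis unfolding est_MDP_def by simp
qed

context
  fixes \<iota> :: "'s::finite \<Rightarrow> real"
    and P :: "'s \<Rightarrow> 'a::finite \<Rightarrow> ('s \<Rightarrow> real) option"
    and obs :: "'s \<Rightarrow> 'z::finite \<Rightarrow> real"
  assumes mdp: "mdp \<iota> P obs"
begin

lemma iota_nonneg: "0 \<le> \<iota> s"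
  using mdp by (simp add: mdp_def is_distr_def)

lemma obs_nonneg: "0 \<le> obs s z"
  using mdp by (simp add: mdp_def is_distr_def)

lemma Ptr_nonneg: "0 \<le> Ptr P s \<alpha> t"
  using mdp by (auto simp: mdp_def is_distr_def Ptr_def split: option.split)

lemma Pr_obs_nonneg: "0 \<le> Pr_obs obs \<tau> \<pi>"
  unfolding Pr_obs_def by (auto intro!: prod_nonneg obs_nonneg)

lemma ex_available_action_choice: "\<exists>a. \<forall>s. a s \<in> AvAct P s"
proof -
  have "\<forall>s. \<exists>\<alpha>. \<alpha> \<in> AvAct P s" using mdp by (simp add: mdp_def ex_in_conv)
  then show ?thesis by (rule choice)
qed

lemma schedulers_nonempty: "schedulers \<iota> P \<noteq> {}"
proof -
  obtain a where a: "\<forall>s. a s \<in> AvAct P s" using ex_available_action_choice by blast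
  define \<sigma> :: "'s list \<times> 'a list \<Rightarrow> 'a \<Rightarrow> real"
    where "\<sigma> \<pi> \<alpha> = (if \<alpha> = a (last_st \<pi>) then 1 else 0)" for \<pi> \<alpha>
  have "is_distr (\<sigma> \<pi>)" for \<pi>
    unfolding is_distr_def \<sigma>_def by simp
  moreover have "\<alpha> \<in> AvAct P (last_st \<pi>)" if "0 < \<sigma> \<pi> \<alpha>" for \<pi> \<alpha>
    using a that unfolding \<sigma>_def by (simp split: if_splits)
  ultimately have "\<sigma> \<in> schedulers \<iota> P"
    unfolding schedulers_def by blast
  then show ?thesis by blast
qed

lemma scheduler_at_path:
  assumes "\<sigma> \<in> schedulers \<iota> P" "is_path \<iota> P \<pi>"
  shows "is_distr (\<sigma> \<pi>)" "0 \<le> \<sigma> \<pi> \<alpha>" "0 < \<sigma> \<pi> \<alpha> \<Longrightarrow> \<alpha> \<in> AvAct P (last_st \<pi>)"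
  using assms unfolding schedulers_def is_distr_def by blast+

lemma is_path_if_Pr_path_nonzero:
  assumes "\<pi> \<in> skeletons n" "Pr_path \<iota> P \<sigma> \<pi> \<noteq> 0"
  shows "is_path \<iota> P \<pi>"
proof -
  have "\<iota> (fst \<pi> ! 0) \<noteq> 0"
    and step: "\<forall>i < length (snd \<pi>). Ptr P (fst \<pi> ! i) (snd \<pi> ! i) (fst \<pi> ! Suc i) \<noteq> 0"
    using assms(2) unfolding Pr_path_def by auto
  moreover have "P (fst \<pi> ! i) (snd \<pi> ! i) \<noteq> None" if "i < length (snd \<pi>)" for i
    using step that by (auto simp: Ptr_def split: option.splits)
  ultimately show ?thesis
    using assms(1) iota_nonneg[of "fst \<pi> ! 0"] Ptr_nonneg unfolding is_path_def skeletons_def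
    by (simp add: order_less_le)
qed

lemma is_path_path_prefix:
  "is_path \<iota> P \<pi> \<Longrightarrow> i < length (snd \<pi>) \<Longrightarrow> is_path \<iota> P (path_prefix \<pi> i)"
  unfolding is_path_def path_prefix_def by auto

lemma Pr_path_nonneg:
  assumes "\<sigma> \<in> schedulers \<iota> P" "\<pi> \<in> skeletons n"
  shows "0 \<le> Pr_path \<iota> P \<sigma> \<pi>"
proof (cases "Pr_path \<iota> P \<sigma> \<pi> = 0")
  case False
  then have "is_path \<iota> P \<pi>" using is_path_if_Pr_path_nonzero assms(2) by blast
  then have "0 \<le> \<sigma> (path_prefix \<pi> i) \<alpha>" if "i < length (snd \<pi>)" for i \<alpha>
    using scheduler_at_path(2)[OF assms(1) is_path_path_prefix] that by blast
  then show ?thesis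
    unfolding Pr_path_def by (auto intro!: mult_nonneg_nonneg prod_nonneg iota_nonneg Ptr_nonneg)
qed simp

lemma Pr_joint_nonneg:
  "\<sigma> \<in> schedulers \<iota> P \<Longrightarrow> \<pi> \<in> skeletons n \<Longrightarrow> 0 \<le> Pr_joint \<iota> P obs \<sigma> \<tau> \<pi>"
  unfolding Pr_joint_def by (intro mult_nonneg_nonneg Pr_path_nonneg Pr_obs_nonneg)

lemma Pr_joint_mult_scheduler_nonneg:
  assumes "\<sigma> \<in> schedulers \<iota> P" "\<pi> \<in> skeletons n"
  shows "0 \<le> Pr_joint \<iota> P obs \<sigma> \<tau> \<pi> * \<sigma> \<pi> \<alpha>"
proof (cases "Pr_path \<iota> P \<sigma> \<pi> = 0")
  case False
  then have "0 \<le> \<sigma> \<pi> \<alpha>"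
    using is_path_if_Pr_path_nonzero scheduler_at_path(2) assms by blast
  then show ?thesis using Pr_joint_nonneg[OF assms] by simp
qed (simp add: Pr_joint_def)

lemma forward_nonneg: "\<sigma> \<in> schedulers \<iota> P \<Longrightarrow> 0 \<le> forward \<iota> P obs \<sigma> \<tau> s"
  unfolding forward_def by (intro sum_nonneg) (simp add: Pr_joint_nonneg)

lemma forward_action_nonneg: "\<sigma> \<in> schedulers \<iota> P \<Longrightarrow> 0 \<le> forward_action \<iota> P obs \<sigma> \<tau> s \<alpha>"
  unfolding forward_action_def by (intro sum_nonneg) (simp add: Pr_joint_mult_scheduler_nonneg)

lemma forward_singleton: "forward \<iota> P obs \<sigma> [z] s = \<iota> s * obs s z"
proof -
  have "forward \<iota> P obs \<sigma> [z] s = (\<Sum>t\<in>UNIV. if t = s then Pr_joint \<iota> P obs \<sigma> [z] ([t], []) else 0)"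
    by (simp add: forward_def skeletons_0 sum.reindex inj_def last_st_def)
  also have "\<dots> = \<iota> s * obs s z"
    by (simp add: Pr_joint_def Pr_path_def Pr_obs_def)
  finally show ?thesis .
qed

lemma normalized_forward_singleton: "normalized (forward \<iota> P obs \<sigma> [z]) = bel_init \<iota> obs z"
proof (cases "\<exists>s. \<iota> s * obs s z > 0")
  case False
  have zero: "\<iota> s * obs s z = 0" for s
    using False mult_nonneg_nonneg[OF iota_nonneg obs_nonneg, of s s z] by (meson not_le order_antisym)
  show ?thesis
    using False unfolding normalized_def bel_init_def forward_singleton zero by simp
qed (simp add: normalized_def bel_init_def forward_singleton)

lemma forward_snoc:
  assumes "\<tau> \<noteq> []"
  shows "forward \<iota> P obs \<sigma> (\<tau> @ [z]) t =
    (\<Sum>s\<in>UNIV. \<Sum>\<alpha>\<in>UNIV. forward_action \<iota> P obs \<sigma> \<tau> s \<alpha> * Ptr P s \<alpha> t * obs t z)"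
proof -
  define n where "n = length \<tau> - 1"
  then have len: "length \<tau> = Suc n" "length (\<tau> @ [z]) - 1 = Suc n" using assms by auto
  have "forward \<iota> P obs \<sigma> (\<tau> @ [z]) t =
      (\<Sum>\<pi>\<in>skeletons n. \<Sum>\<alpha>\<in>UNIV. Pr_joint \<iota> P obs \<sigma> (\<tau> @ [z]) (fst \<pi> @ [t], snd \<pi> @ [\<alpha>]))"
    unfolding forward_def len sum_skeletons_Suc by (simp add: last_st_def)
  also have "\<dots> = (\<Sum>\<pi>\<in>skeletons n. \<Sum>\<alpha>\<in>UNIV.
      (Pr_joint \<iota> P obs \<sigma> \<tau> \<pi> * \<sigma> \<pi> \<alpha>) * (Ptr P (last_st \<pi>) \<alpha> t * obs t z))"
    using len by (intro sum.cong refl) (simp add: Pr_joint_snoc mult.assoc)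
  also have "\<dots> = (\<Sum>\<alpha>\<in>UNIV. \<Sum>\<pi>\<in>skeletons n.
      (Pr_joint \<iota> P obs \<sigma> \<tau> \<pi> * \<sigma> \<pi> \<alpha>) * (Ptr P (last_st \<pi>) \<alpha> t * obs t z))"
    by (rule sum.swap)
  also have "\<dots> = (\<Sum>\<alpha>\<in>UNIV. \<Sum>s\<in>UNIV. forward_action \<iota> P obs \<sigma> \<tau> s \<alpha> * (Ptr P s \<alpha> t * obs t z))"
    unfolding forward_action_def n_def[symmetric]
    by (intro sum.cong refl) (rule sum_mult_group_by)
  also have "\<dots> = (\<Sum>s\<in>UNIV. \<Sum>\<alpha>\<in>UNIV. forward_action \<iota> P obs \<sigma> \<tau> s \<alpha> * Ptr P s \<alpha> t * obs t z)"
    by (subst sum.swap) (simp add: mult.assoc)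
  finally show ?thesis .
qed

lemma sum_forward_action:
  assumes "\<sigma> \<in> schedulers \<iota> P"
  shows "(\<Sum>\<alpha>\<in>UNIV. forward_action \<iota> P obs \<sigma> \<tau> s \<alpha>) = forward \<iota> P obs \<sigma> \<tau> s"
proof -
  have "Pr_joint \<iota> P obs \<sigma> \<tau> \<pi> * (\<Sum>\<alpha>\<in>UNIV. \<sigma> \<pi> \<alpha>) = Pr_joint \<iota> P obs \<sigma> \<tau> \<pi>"
    if "\<pi> \<in> skeletons n" for \<pi> n
  proof (cases "Pr_path \<iota> P \<sigma> \<pi> = 0")
    case False
    then have "is_path \<iota> P \<pi>" using is_path_if_Pr_path_nonzero that by blast
    then show ?thesis using scheduler_at_path(1)[OF assms] by (simp add: is_distr_def)
  qed (simp add: Pr_joint_def)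
  then show ?thesis
    unfolding forward_action_def forward_def
    by (subst sum.swap) (auto simp: sum_distrib_left[symmetric] intro!: sum.cong)
qed

lemma available_if_forward_action_pos:
  assumes "\<sigma> \<in> schedulers \<iota> P" "0 < forward_action \<iota> P obs \<sigma> \<tau> s \<alpha>"
  shows "\<alpha> \<in> AvAct P s"
proof -
  obtain \<pi> where \<pi>: "\<pi> \<in> skeletons (length \<tau> - 1)"
    and "0 < (if last_st \<pi> = s then Pr_joint \<iota> P obs \<sigma> \<tau> \<pi> * \<sigma> \<pi> \<alpha> else 0)"
    using assms(2) unfolding forward_action_def by (metis (no_types, lifting) not_less sum_nonpos)
  then have last: "last_st \<pi> = s" and pos: "0 < Pr_joint \<iota> P obs \<sigma> \<tau> \<pi> * \<sigma> \<pi> \<alpha>"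
    by (auto split: if_splits)
  then have "Pr_path \<iota> P \<sigma> \<pi> \<noteq> 0" by (auto simp: Pr_joint_def)
  then have "is_path \<iota> P \<pi>" using is_path_if_Pr_path_nonzero \<pi> by blast
  moreover have "0 < \<sigma> \<pi> \<alpha>"
    using pos Pr_joint_nonneg[OF assms(1) \<pi>, of \<tau>] by (auto simp: zero_less_mult_iff)
  ultimately show ?thesis using scheduler_at_path(3)[OF assms(1)] last by blast
qed

lemma forward_action_factorization:
  assumes \<sigma>: "\<sigma> \<in> schedulers \<iota> P"
  obtains \<zeta> where "stationary_choice P \<zeta>"
    and "\<And>s \<alpha>. forward_action \<iota> P obs \<sigma> \<tau> s \<alpha> = forward \<iota> P obs \<sigma> \<tau> s * \<zeta> s \<alpha>"
proof -
  let ?u = "forward \<iota> P obs \<sigma> \<tau>" and ?M = "forward_action \<iota> P obs \<sigma> \<tau>"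
  obtain a where a: "\<forall>s. a s \<in> AvAct P s" using ex_available_action_choice by blast
  define \<zeta> where "\<zeta> s \<alpha> = (if ?u s = 0 then (if \<alpha> = a s then 1 else 0) else ?M s \<alpha> / ?u s)" for s \<alpha>
  have "is_distr (\<zeta> s)" for s
  proof (cases "?u s = 0")
    case False
    then show ?thesis
      unfolding is_distr_def \<zeta>_def using forward_action_nonneg[OF \<sigma>] forward_nonneg[OF \<sigma>]
      by (simp add: sum_divide_distrib[symmetric] sum_forward_action[OF \<sigma>])
  qed (simp add: is_distr_def \<zeta>_def)
  moreover have "\<alpha> \<in> AvAct P s" if "0 < \<zeta> s \<alpha>" for s \<alpha>
  proof (cases "?u s = 0")
    case False
    then have "0 < ?M s \<alpha>"
      using that forward_nonneg[OF \<sigma>, of \<tau> s] by (simp add: \<zeta>_def zero_less_divide_iff)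
    then show ?thesis using available_if_forward_action_pos[OF \<sigma>] by blast
  qed (use that a in \<open>simp add: \<zeta>_def split: if_splits\<close>)
  moreover have "?M s \<alpha> = ?u s * \<zeta> s \<alpha>" for s \<alpha>
  proof (cases "?u s = 0")
    case True
    have "?M s \<alpha> \<le> ?u s"
      unfolding sum_forward_action[OF \<sigma>, symmetric]
      by (rule member_le_sum) (simp_all add: forward_action_nonneg[OF \<sigma>])
    then show ?thesis using True forward_action_nonneg[OF \<sigma>, of \<tau> s \<alpha>] by simp
  qed (simp add: \<zeta>_def)
  ultimately show ?thesis using that unfolding stationary_choice_def by blast
qed

lemma forward_snoc_eq_belief_step:
  assumes "\<tau> \<noteq> []" "\<And>s \<alpha>. forward_action \<iota> P obs \<sigma> \<tau> s \<alpha> = forward \<iota> P obs \<sigma> \<tau> s * \<zeta> s \<alpha>"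
  shows "forward \<iota> P obs \<sigma> (\<tau> @ [z]) = belief_step P obs \<zeta> z (forward \<iota> P obs \<sigma> \<tau>)"
  unfolding fun_eq_iff forward_snoc[OF assms(1)] belief_step_def
  by (simp add: assms(2) sum_distrib_left mult.assoc)

lemma scheduler_realising_choice:
  assumes \<sigma>: "\<sigma> \<in> schedulers \<iota> P" and \<zeta>: "stationary_choice P \<zeta>"
  obtains \<sigma>' where "\<sigma>' \<in> schedulers \<iota> P" "forward \<iota> P obs \<sigma>' \<tau> = forward \<iota> P obs \<sigma> \<tau>"
    and "\<And>s \<alpha>. forward_action \<iota> P obs \<sigma>' \<tau> s \<alpha> = forward \<iota> P obs \<sigma>' \<tau> s * \<zeta> s \<alpha>"
proof -
  define n where "n = length \<tau> - 1"
  define \<sigma>' where "\<sigma>' \<pi> = (if length (snd \<pi>) = n then \<zeta> (last_st \<pi>) else \<sigma> \<pi>)" for \<pi>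
  have "\<sigma>' \<in> schedulers \<iota> P"
    unfolding schedulers_def
  proof (intro CollectI allI impI)
    fix \<pi> assume "is_path \<iota> P \<pi>"
    then show "is_distr (\<sigma>' \<pi>) \<and> (\<forall>\<alpha>. 0 < \<sigma>' \<pi> \<alpha> \<longrightarrow> \<alpha> \<in> AvAct P (last_st \<pi>))"
      using \<zeta> scheduler_at_path[OF \<sigma>] unfolding stationary_choice_def \<sigma>'_def by simp
  qed
  moreover have "Pr_joint \<iota> P obs \<sigma>' \<tau> \<pi> = Pr_joint \<iota> P obs \<sigma> \<tau> \<pi>" if "\<pi> \<in> skeletons n" for \<pi>
    unfolding Pr_joint_def by (subst Pr_path_cong_prefixes[OF that]) (auto simp: \<sigma>'_def)
  then have same: "forward \<iota> P obs \<sigma>' \<tau> = forward \<iota> P obs \<sigma> \<tau>"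
    unfolding fun_eq_iff forward_def n_def[symmetric] by (auto intro!: sum.cong)
  moreover have "forward_action \<iota> P obs \<sigma>' \<tau> s \<alpha> = forward \<iota> P obs \<sigma>' \<tau> s * \<zeta> s \<alpha>" for s \<alpha>
  proof -
    have "forward_action \<iota> P obs \<sigma>' \<tau> s \<alpha> =
        (\<Sum>\<pi>\<in>skeletons n. (if last_st \<pi> = s then Pr_joint \<iota> P obs \<sigma>' \<tau> \<pi> else 0) * \<zeta> s \<alpha>)"
      unfolding forward_action_def n_def[symmetric]
      by (intro sum.cong refl) (auto simp: \<sigma>'_def skeletons_def)
    then show ?thesis
      unfolding forward_def n_def[symmetric] by (simp add: sum_distrib_right)
  qed
  ultimately show ?thesis using that by blast
qed

lemma est_MDP_eq_normalized_forward:
  "\<tau> \<noteq> [] \<Longrightarrow> est_MDP \<iota> P obs \<tau> = (\<lambda>\<sigma>. normalized (forward \<iota> P obs \<sigma> \<tau>)) ` schedulers \<iota> P"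
proof (induction \<tau> rule: rev_induct)
  case (snoc z \<tau>)
  show ?case
  proof (cases "\<tau> = []")
    case True
    then show ?thesis
      using schedulers_nonempty by (auto simp: est_MDP_singleton normalized_forward_singleton)
  next
    case False
    let ?step = "\<lambda>\<sigma> \<zeta>. normalized (belief_step P obs \<zeta> z (forward \<iota> P obs \<sigma> \<tau>))"
    have "est_MDP \<iota> P obs (\<tau> @ [z]) =
        (\<Union>\<sigma>\<in>schedulers \<iota> P. est_up P obs (normalized (forward \<iota> P obs \<sigma> \<tau>)) z)"
      by (simp add: est_MDP_snoc[OF False] snoc.IH[OF False])
    also have "\<dots> = (\<Union>\<sigma>\<in>schedulers \<iota> P. {?step \<sigma> \<zeta> | \<zeta>. stationary_choice P \<zeta>})"
      using forward_nonneg unfolding est_up_eq_normalized_belief_step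
      by (intro SUP_cong refl) (simp add: normalized_belief_step_normalized)
    also have "\<dots> = {?step \<sigma> \<zeta> | \<sigma> \<zeta>. \<sigma> \<in> schedulers \<iota> P \<and> stationary_choice P \<zeta>}"
      by blast
    also have "\<dots> = (\<lambda>\<sigma>. normalized (forward \<iota> P obs \<sigma> (\<tau> @ [z]))) ` schedulers \<iota> P"
    proof (intro equalityI subsetI)
      fix b assume "b \<in> {?step \<sigma> \<zeta> | \<sigma> \<zeta>. \<sigma> \<in> schedulers \<iota> P \<and> stationary_choice P \<zeta>}"
      then obtain \<sigma> \<zeta> where \<sigma>: "\<sigma> \<in> schedulers \<iota> P" and \<zeta>: "stationary_choice P \<zeta>"
        and b: "b = ?step \<sigma> \<zeta>" by blast
      obtain \<sigma>' where \<sigma>': "\<sigma>' \<in> schedulers \<iota> P" and "forward \<iota> P obs \<sigma>' \<tau> = forward \<iota> P obs \<sigma> \<tau>"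
        and "\<And>s \<alpha>. forward_action \<iota> P obs \<sigma>' \<tau> s \<alpha> = forward \<iota> P obs \<sigma>' \<tau> s * \<zeta> s \<alpha>"
        using scheduler_realising_choice[OF \<sigma> \<zeta>] by blast
      then have "forward \<iota> P obs \<sigma>' (\<tau> @ [z]) = belief_step P obs \<zeta> z (forward \<iota> P obs \<sigma> \<tau>)"
        using forward_snoc_eq_belief_step[OF False] by metis
      then show "b \<in> (\<lambda>\<sigma>. normalized (forward \<iota> P obs \<sigma> (\<tau> @ [z]))) ` schedulers \<iota> P"
        using b \<sigma>' by (auto intro: rev_image_eqI)
    next
      fix b assume "b \<in> (\<lambda>\<sigma>. normalized (forward \<iota> P obs \<sigma> (\<tau> @ [z]))) ` schedulers \<iota> P"
      then obtain \<sigma> where \<sigma>: "\<sigma> \<in> schedulers \<iota> P" and b: "b = normalized (forward \<iota> P obs \<sigma> (\<tau> @ [z]))"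
        by blast
      obtain \<zeta> where "stationary_choice P \<zeta>"
        and "\<And>s \<alpha>. forward_action \<iota> P obs \<sigma> \<tau> s \<alpha> = forward \<iota> P obs \<sigma> \<tau> s * \<zeta> s \<alpha>"
        using forward_action_factorization[OF \<sigma>] by blast
      then have "b = ?step \<sigma> \<zeta>"
        using b forward_snoc_eq_belief_step[OF False] by metis
      then show "b \<in> {?step \<sigma> \<zeta> | \<sigma> \<zeta>. \<sigma> \<in> schedulers \<iota> P \<and> stationary_choice P \<zeta>}"
        using \<sigma> \<open>stationary_choice P \<zeta>\<close> by blast
    qed
    finally show ?thesis .
  qed
qed simp

lemma sum_Paths_tr_by_last_state:
  assumes "\<tau> \<noteq> []"
  shows "(\<Sum>\<pi>\<in>Paths_tr \<iota> P \<tau>. Pr_joint \<iota> P obs \<sigma> \<tau> \<pi> * h (last_st \<pi>)) =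
    (\<Sum>s\<in>UNIV. forward \<iota> P obs \<sigma> \<tau> s * h s)"
proof -
  let ?n = "length \<tau> - 1"
  have "Paths_tr \<iota> P \<tau> \<subseteq> skeletons ?n"
    using assms by (auto simp: Paths_tr_def skeletons_def is_path_def)
  moreover have "Pr_joint \<iota> P obs \<sigma> \<tau> \<pi> = 0" if "\<pi> \<in> skeletons ?n - Paths_tr \<iota> P \<tau>" for \<pi>
    using that assms is_path_if_Pr_path_nonzero
    by (fastforce simp: Paths_tr_def skeletons_def Pr_joint_def)
  ultimately have "(\<Sum>\<pi>\<in>Paths_tr \<iota> P \<tau>. Pr_joint \<iota> P obs \<sigma> \<tau> \<pi> * h (last_st \<pi>)) =
      (\<Sum>\<pi>\<in>skeletons ?n. Pr_joint \<iota> P obs \<sigma> \<tau> \<pi> * h (last_st \<pi>))"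
    by (intro sum.mono_neutral_left finite_skeletons) auto
  also have "\<dots> = (\<Sum>s\<in>UNIV. forward \<iota> P obs \<sigma> \<tau> s * h s)"
    unfolding forward_def by (rule sum_mult_group_by)
  finally show ?thesis .
qed

lemma posterior_risk_eq_normalized_forward:
  assumes "\<tau> \<noteq> []"
  shows "(\<Sum>\<pi>\<in>Paths_tr \<iota> P \<tau>. Pr_cond \<iota> P obs \<sigma> \<pi> \<tau> * r (last_st \<pi>)) =
    (\<Sum>s\<in>UNIV. normalized (forward \<iota> P obs \<sigma> \<tau>) s * r s)"
proof -
  have "Pr_trace \<iota> P obs \<sigma> \<tau> = (\<Sum>s\<in>UNIV. forward \<iota> P obs \<sigma> \<tau> s)"
    using sum_Paths_tr_by_last_state[OF assms, of \<sigma> "\<lambda>_. 1"]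
    by (simp add: Pr_trace_def Pr_joint_def)
  moreover have "(\<Sum>\<pi>\<in>Paths_tr \<iota> P \<tau>. Pr_cond \<iota> P obs \<sigma> \<pi> \<tau> * r (last_st \<pi>)) =
      (\<Sum>\<pi>\<in>Paths_tr \<iota> P \<tau>. Pr_joint \<iota> P obs \<sigma> \<tau> \<pi> * r (last_st \<pi>)) / Pr_trace \<iota> P obs \<sigma> \<tau>"
    by (simp add: Pr_cond_def Pr_joint_def sum_divide_distrib mult_ac)
  ultimately show ?thesis
    by (simp add: sum_Paths_tr_by_last_state[OF assms] normalized_def sum_divide_distrib)
qed

end

theorem theorem1:
  fixes \<iota> :: "'s::finite \<Rightarrow> real"
    and P :: "'s \<Rightarrow> 'a::finite \<Rightarrow> ('s \<Rightarrow> real) option"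
    and obs :: "'s \<Rightarrow> 'z::finite \<Rightarrow> real"
    and \<tau> :: "'z list"
    and r :: "'s \<Rightarrow> real"
  assumes "mdp \<iota> P obs"
    and "\<tau> \<noteq> []"
    and "\<forall>s. 0 \<le> r s"
  shows "risk \<iota> P obs r \<tau> = (SUP bel\<in>est_MDP \<iota> P obs \<tau>. \<Sum>s\<in>UNIV. bel s * r s)"
proof -
  have "risk \<iota> P obs r \<tau> =
      (SUP \<sigma>\<in>schedulers \<iota> P. \<Sum>s\<in>UNIV. normalized (forward \<iota> P obs \<sigma> \<tau>) s * r s)"
    unfolding risk_def using posterior_risk_eq_normalized_forward[OF assms(1,2)] by simp
  also have "\<dots> = (SUP bel\<in>est_MDP \<iota> P obs \<tau>. \<Sum>s\<in>UNIV. bel s * r s)"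
    unfolding est_MDP_eq_normalized_forward[OF assms(1,2)] image_image ..
  finally show ?thesis .
qed

end
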